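(* Let $\mathfrak{S}=(\mathcal{X},\mathsf{S},\gamma,(\Lambda_{a})_{a\in\mathcal{A}})$ be a spectral decomposition system for the Euclidean space $\mathfrak{H}$, let $\mathcal{D}$ be a nonempty subset of $\mathfrak{H}$, and set \[\mathcal{K}=\Big\{\sum_{i=1}^m\alpha_iX_i : m\geq 1,\ (X_i)_{1\leq i\leq m}\in\mathcal{D}^m,\ (\alpha_i)_{1\leq i\leq m}\in[0,+\infty)^m\Big\}.\] Then the following are equivalent: (i) $\langle X,Y\rangle=\langle\gamma(X),\gamma(Y)\rangle$ for all $X,Y\in\mathcal{D}$; (ii) $\|X-Y\|=\|\gamma(X)-\gamma(Y)\|$ for all $X,Y\in\mathcal{D}$; (iii) there exists $a\in\mathcal{A}$ such that $X=\Lambda_a\gamma(X)$ for all $X\in\mathcal{D}$; (iv) there exists $a\in\mathcal{A}$ such that $X=\Lambda_a\gamma(X)$ for all $X\in\mathcal{K}$. Moreover, if one of (i)–(iv) holds, then for every $m\geq 1$, every $(X_i)_{1\leq i\leq m}\in\mathcal{D}^m$ and every $(\alpha_i)_{1\leq i\leq m}\in[0,+\infty)^m$, $\gamma\big(\sum_{i=1}^m\alpha_iX_i\big)=\sum_{i=1}^m\alpha_i\gamma(X_i)$.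
   Context: A Euclidean space is a finite-dimensional real inner product space; inner products are written $\langle\cdot,\cdot\rangle$ and norms $\|\cdot\|$. Let $\mathfrak{H}$ and $\mathcal{X}$ be Euclidean spaces, let $\mathsf{S}$ be a group acting on $\mathcal{X}$ by linear isometries, let $\gamma\colon\mathfrak{H}\to\mathcal{X}$, and let $(\Lambda_a)_{a\in\mathcal{A}}$ be a family of linear operators from $\mathcal{X}$ to $\mathfrak{H}$. The orbit of $x$ is $\mathsf{S}\cdot x=\{s\cdot x: s\in\mathsf{S}\}$; a map $f$ on $\mathcal{X}$ is $\mathsf{S}$-invariant if $f(s\cdot x)=f(x)$ for all $s,x$. The tuple is a spectral decomposition system for $\mathfrak{H}$ if: [A] every $\Lambda_a$ is an isometry; [B] there exists an $\mathsf{S}$-invariant $\tau\colon\mathcal{X}\to\mathcal{X}$ with $\tau(x)\in\mathsf{S}\cdot x$ for all $x$ and $\gamma\circ\Lambda_a=\tau$ for all $a$; [C] for every $X\in\mathfrak{H}$ there is $a$ with $X=\Lambda_a\gamma(X)$; [D] $\langle X,Y\rangle\leq\langle\gamma(X),\gamma(Y)\rangle$ for all $X,Y\in\mathfrak{H}$. *)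

theory Defs
  imports "HOL-Analysis.Analysis" "HOL-Algebra.Group"
begin

definition isometric_linear_action :: "('g, 'b) monoid_scheme \<Rightarrow> ('g \<Rightarrow> 'x::euclidean_space \<Rightarrow> 'x) \<Rightarrow> bool" where
  "isometric_linear_action G act \<longleftrightarrow>
     group G \<and>
     (\<forall>s\<in>carrier G. linear (act s) \<and> (\<forall>x. norm (act s x) = norm x)) \<and>
     (\<forall>x. act \<one>\<^bsub>G\<^esub> x = x) \<and>
     (\<forall>s\<in>carrier G. \<forall>t\<in>carrier G. \<forall>x. act (s \<otimes>\<^bsub>G\<^esub> t) x = act s (act t x))"

definition orbit :: "('g, 'b) monoid_scheme \<Rightarrow> ('g \<Rightarrow> 'x \<Rightarrow> 'x) \<Rightarrow> 'x \<Rightarrow> 'x set" where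
  "orbit G act x = {act s x | s. s \<in> carrier G}"

definition spectral_decomposition_system ::
  "('g, 'b) monoid_scheme \<Rightarrow> ('g \<Rightarrow> 'x::euclidean_space \<Rightarrow> 'x) \<Rightarrow> ('h::euclidean_space \<Rightarrow> 'x)
    \<Rightarrow> 'a set \<Rightarrow> ('a \<Rightarrow> 'x \<Rightarrow> 'h) \<Rightarrow> bool" where
  "spectral_decomposition_system G act \<gamma> A \<Lambda> \<longleftrightarrow>
     isometric_linear_action G act \<and>
     (\<forall>a\<in>A. linear (\<Lambda> a) \<and> (\<forall>x. norm (\<Lambda> a x) = norm x)) \<and>
     (\<exists>\<tau>. (\<forall>s\<in>carrier G. \<forall>x. \<tau> (act s x) = \<tau> x) \<and>
          (\<forall>x. \<tau> x \<in> orbit G act x) \<and>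
          (\<forall>a\<in>A. \<forall>x. \<gamma> (\<Lambda> a x) = \<tau> x)) \<and>
     (\<forall>X. \<exists>a\<in>A. X = \<Lambda> a (\<gamma> X)) \<and>
     (\<forall>X Y. inner X Y \<le> inner (\<gamma> X) (\<gamma> Y))"

definition cone_gen :: "'h::real_vector set \<Rightarrow> 'h set" where
  "cone_gen D = {(\<Sum>i=1..m. \<alpha> i *\<^sub>R X i) | m (\<alpha>::nat \<Rightarrow> real) (X::nat \<Rightarrow> 'h).
       m \<ge> 1 \<and> (\<forall>i\<in>{1..m}. X i \<in> D \<and> \<alpha> i \<ge> 0)}"

end

theory Submission
  imports Defs
begin

text \<open>
  Since \<open>\<gamma>\<close> preserves norms and only increases inner products, it commutes with nonnegative
  combinations of any family whose Gram matrix it preserves: the image of the combination and the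
  combination of the images have the same norm, and their inner product is at least that norm
  squared.

  For (i) \<open>\<Longrightarrow>\<close> (iii), pick a basis \<open>F \<subseteq> D\<close> of \<open>span D\<close> and decompose its sum as
  \<open>\<Sum>F = \<Lambda> a (\<gamma> (\<Sum>F))\<close>. By additivity the vectors \<open>\<Lambda> a (\<gamma> x)\<close>, \<open>x \<in> F\<close>, also sum to \<open>\<Sum>F\<close>,
  while \<open>\<langle>\<Lambda> a (\<gamma> x), y\<rangle> \<le> \<langle>x, y\<rangle>\<close> on \<open>F\<close>; summing, all these inequalities are tight, so
  \<open>\<Lambda> a \<circ> \<gamma>\<close> fixes \<open>F\<close>. Being inner product preserving on \<open>D\<close>, it then fixes all of \<open>D\<close>.
  Conversely (iii) gives (i) because \<open>\<Lambda> a\<close> is a linear isometry, and (iii) extends to the cone by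
  additivity and linearity of \<open>\<Lambda> a\<close>.
\<close>

lemma eq_if_norm_eq_inner_ge:
  fixes u v :: "'a::real_inner"
  assumes "norm u = norm v" and "inner v v \<le> inner u v"
  shows "u = v"
proof -
  have "inner (u - v) (u - v) = (norm u)\<^sup>2 - 2 * inner u v + (norm v)\<^sup>2"
    by (simp add: power2_norm_eq_inner inner_diff_left inner_diff_right inner_commute)
  also have "\<dots> \<le> 0"
    using assms by (simp add: power2_norm_eq_inner)
  finally have "u - v = 0"
    by (metis inner_gt_zero_iff not_le)
  then show ?thesis by simp
qed

lemma linear_isometry_inner:
  fixes L :: "'a::real_inner \<Rightarrow> 'b::real_inner"
  assumes "linear L" and "\<And>x. norm (L x) = norm x"
  shows "inner (L x) (L y) = inner x y"
  using assms by (simp add: dot_norm linear_add[symmetric])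

lemma norm_preserving_inner_eq_iff_dist_eq:
  fixes f :: "'a::real_inner \<Rightarrow> 'b::real_inner"
  assumes "\<And>x. norm (f x) = norm x"
  shows "inner x y = inner (f x) (f y) \<longleftrightarrow> norm (x - y) = norm (f x - f y)"
  using assms by (simp add: dot_norm_neg power2_eq_iff_nonneg)

lemma norm_sum_scaleR_eq_if_Gram_eq:
  fixes u :: "'i \<Rightarrow> 'a::real_inner" and v :: "'i \<Rightarrow> 'b::real_inner"
  assumes "\<forall>i\<in>I. \<forall>j\<in>I. inner (u i) (u j) = inner (v i) (v j)"
  shows "norm (\<Sum>i\<in>I. c i *\<^sub>R u i) = norm (\<Sum>i\<in>I. c i *\<^sub>R v i)"
  using assms by (simp add: norm_eq_sqrt_inner inner_sum_left inner_sum_right)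

lemma sum_nonneg_scaleR_commute:
  fixes \<gamma> :: "'a::real_inner \<Rightarrow> 'b::real_inner"
  assumes inner_le: "\<And>X Y. inner X Y \<le> inner (\<gamma> X) (\<gamma> Y)"
    and norm_eq: "\<And>X. norm (\<gamma> X) = norm X"
    and "finite I"
    and Gram: "\<forall>i\<in>I. \<forall>j\<in>I. inner (X i) (X j) = inner (\<gamma> (X i)) (\<gamma> (X j))"
    and nonneg: "\<forall>i\<in>I. \<alpha> i \<ge> 0"
  shows "\<gamma> (\<Sum>i\<in>I. \<alpha> i *\<^sub>R X i) = (\<Sum>i\<in>I. \<alpha> i *\<^sub>R \<gamma> (X i))"
proof (rule eq_if_norm_eq_inner_ge)
  define Z where "Z = (\<Sum>i\<in>I. \<alpha> i *\<^sub>R X i)"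
  define V where "V = (\<Sum>i\<in>I. \<alpha> i *\<^sub>R \<gamma> (X i))"
  have "norm V = norm Z"
    unfolding V_def Z_def using norm_sum_scaleR_eq_if_Gram_eq[OF Gram] by metis
  then show "norm (\<gamma> Z) = norm V"
    by (simp add: norm_eq)
  have "inner V V = inner Z Z"
    using \<open>norm V = norm Z\<close> by (simp add: norm_eq_sqrt_inner)
  also have "\<dots> = (\<Sum>i\<in>I. \<alpha> i * inner Z (X i))"
    by (subst (2) Z_def) (simp add: inner_sum_right)
  also have "\<dots> \<le> (\<Sum>i\<in>I. \<alpha> i * inner (\<gamma> Z) (\<gamma> (X i)))"
    by (rule sum_mono) (simp add: nonneg mult_left_mono inner_le)
  also have "\<dots> = inner (\<gamma> Z) V"
    by (simp add: V_def inner_sum_right)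
  finally show "inner V V \<le> inner (\<gamma> Z) V" .
qed

lemma fixed_on_finite_set_if_sum_fixed:
  fixes P :: "'a::real_inner \<Rightarrow> 'a"
  assumes "finite F"
    and sum_eq: "(\<Sum>x\<in>F. P x) = (\<Sum>x\<in>F. x)"
    and inner_le: "\<And>x y. x \<in> F \<Longrightarrow> y \<in> F \<Longrightarrow> inner (P x) y \<le> inner x y"
    and norm_eq: "\<And>x. x \<in> F \<Longrightarrow> norm (P x) = norm x"
    and "x \<in> F"
  shows "P x = x"
proof (rule eq_if_norm_eq_inner_ge)
  have le_sum: "inner (P u) (\<Sum>F) \<le> inner u (\<Sum>F)" if "u \<in> F" for u
    using that \<open>finite F\<close> by (simp add: inner_sum_right sum_mono inner_le)
  have "(\<Sum>u\<in>F. inner (P u) (\<Sum>F)) = (\<Sum>u\<in>F. inner u (\<Sum>F))"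
    using sum_eq by (simp add: inner_sum_left[symmetric])
  then have "inner (P x) (\<Sum>F) = inner x (\<Sum>F)"
    using le_sum \<open>x \<in> F\<close> \<open>finite F\<close> by (rule sum_mono_inv)
  then have "(\<Sum>y\<in>F. inner (P x) y) = (\<Sum>y\<in>F. inner x y)"
    by (simp add: inner_sum_right)
  then have "inner (P x) x = inner x x"
    using inner_le[OF \<open>x \<in> F\<close>] \<open>x \<in> F\<close> \<open>finite F\<close> by (rule sum_mono_inv)
  then show "inner x x \<le> inner (P x) x"
    by simp
  show "norm (P x) = norm x"
    using norm_eq \<open>x \<in> F\<close> .
qed

lemma fixed_if_inner_preserving_fixes_spanning_set:
  fixes P :: "'a::real_inner \<Rightarrow> 'a"
  assumes inner_eq: "\<And>u v. u \<in> S \<Longrightarrow> v \<in> S \<Longrightarrow> inner (P u) (P v) = inner u v"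
    and fixes_F: "\<And>u. u \<in> F \<Longrightarrow> P u = u"
    and "F \<subseteq> S" and "Y \<in> S" and "Y \<in> span F"
  shows "P Y = Y"
proof (rule eq_if_norm_eq_inner_ge)
  have "orthogonal (P Y - Y) y" if "y \<in> F" for y
    using inner_eq[of Y y] fixes_F[of y] that assms(3,4)
    by (auto simp: orthogonal_def inner_diff_left)
  then have "orthogonal (P Y - Y) Y"
    using orthogonal_to_span \<open>Y \<in> span F\<close> by blast
  then show "inner Y Y \<le> inner (P Y) Y"
    by (simp add: orthogonal_def inner_diff_left)
  show "norm (P Y) = norm Y"
    using inner_eq[of Y Y] \<open>Y \<in> S\<close> by (simp add: norm_eq_sqrt_inner)
qed

lemma subset_cone_gen: "D \<subseteq> cone_gen D"
proof
  fix X assume "X \<in> D"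
  then show "X \<in> cone_gen D"
    unfolding cone_gen_def by (intro CollectI exI[of _ 1] exI[of _ "\<lambda>_. 1"] exI[of _ "\<lambda>_. X"]) auto
qed

context
  fixes G :: "('g, 'b) monoid_scheme"
    and act :: "'g \<Rightarrow> 'x::euclidean_space \<Rightarrow> 'x"
    and \<gamma> :: "'h::euclidean_space \<Rightarrow> 'x"
    and A :: "'a set"
    and \<Lambda> :: "'a \<Rightarrow> 'x \<Rightarrow> 'h"
  assumes sds: "spectral_decomposition_system G act \<gamma> A \<Lambda>"
begin

lemma linear_Lambda: "a \<in> A \<Longrightarrow> linear (\<Lambda> a)"
  using sds unfolding spectral_decomposition_system_def by blast

lemma norm_Lambda: "a \<in> A \<Longrightarrow> norm (\<Lambda> a x) = norm x"
  using sds unfolding spectral_decomposition_system_def by blast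

lemma inner_Lambda:
  assumes "a \<in> A"
  shows "inner (\<Lambda> a x) (\<Lambda> a y) = inner x y"
  using linear_isometry_inner[OF linear_Lambda[OF assms] norm_Lambda[OF assms]] .

lemma spectral_decomposition: "\<exists>a\<in>A. X = \<Lambda> a (\<gamma> X)"
  using sds unfolding spectral_decomposition_system_def by blast

lemma inner_le_inner_gamma: "inner X Y \<le> inner (\<gamma> X) (\<gamma> Y)"
  using sds unfolding spectral_decomposition_system_def by blast

lemma norm_gamma: "norm (\<gamma> X) = norm X"
proof -
  obtain a where "a \<in> A" "X = \<Lambda> a (\<gamma> X)"
    using spectral_decomposition by blast
  then show ?thesis
    using norm_Lambda by metis
qed

lemma gamma_Lambda_gamma:
  assumes "a \<in> A"
  shows "\<gamma> (\<Lambda> a (\<gamma> X)) = \<gamma> X"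
proof -
  obtain \<tau> where \<tau>: "\<And>a x. a \<in> A \<Longrightarrow> \<gamma> (\<Lambda> a x) = \<tau> x"
    using sds unfolding spectral_decomposition_system_def by blast
  obtain b where "b \<in> A" "X = \<Lambda> b (\<gamma> X)"
    using spectral_decomposition by blast
  then have "\<gamma> X = \<tau> (\<gamma> X)"
    using \<tau> by metis
  then show ?thesis
    using \<tau>[OF assms] by simp
qed

lemma gamma_sum_nonneg_scaleR:
  assumes "\<forall>X\<in>D. \<forall>Y\<in>D. inner X Y = inner (\<gamma> X) (\<gamma> Y)"
    and "finite I" and "\<forall>i\<in>I. X i \<in> D \<and> \<alpha> i \<ge> 0"
  shows "\<gamma> (\<Sum>i\<in>I. \<alpha> i *\<^sub>R X i) = (\<Sum>i\<in>I. \<alpha> i *\<^sub>R \<gamma> (X i))"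
  using assms by (intro sum_nonneg_scaleR_commute inner_le_inner_gamma norm_gamma) auto

lemma Lambda_gamma_eq_if_inner_gamma_eq:
  assumes inner_eq: "\<forall>X\<in>D. \<forall>Y\<in>D. inner X Y = inner (\<gamma> X) (\<gamma> Y)"
  shows "\<exists>a\<in>A. \<forall>X\<in>D. X = \<Lambda> a (\<gamma> X)"
proof -
  obtain F where "F \<subseteq> D" "independent F" "D \<subseteq> span F"
    using maximal_independent_subset by blast
  then have "finite F"
    using finiteI_independent by blast
  obtain a where "a \<in> A" and a: "\<Sum>F = \<Lambda> a (\<gamma> (\<Sum>F))"
    using spectral_decomposition by blast
  define P where "P X = \<Lambda> a (\<gamma> X)" for X
  have "\<gamma> (\<Sum>F) = (\<Sum>x\<in>F. \<gamma> x)"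
    using gamma_sum_nonneg_scaleR[OF inner_eq \<open>finite F\<close>, of id "\<lambda>_. 1"] \<open>F \<subseteq> D\<close> by auto
  then have "(\<Sum>x\<in>F. P x) = (\<Sum>x\<in>F. x)"
    using a linear_Lambda[OF \<open>a \<in> A\<close>] by (simp add: P_def linear_sum)
  moreover have "inner (P x) y \<le> inner x y" if "x \<in> F" "y \<in> F" for x y
  proof -
    have "inner (P x) y \<le> inner (\<gamma> (P x)) (\<gamma> y)"
      by (rule inner_le_inner_gamma)
    also have "\<dots> = inner (\<gamma> x) (\<gamma> y)"
      by (simp add: P_def gamma_Lambda_gamma[OF \<open>a \<in> A\<close>])
    also have "\<dots> = inner x y"
      using inner_eq that \<open>F \<subseteq> D\<close> by (simp add: subset_iff)
    finally show ?thesis .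
  qed
  moreover have "norm (P x) = norm x" for x
    using norm_Lambda[OF \<open>a \<in> A\<close>] norm_gamma by (simp add: P_def)
  ultimately have "P x = x" if "x \<in> F" for x
    using fixed_on_finite_set_if_sum_fixed \<open>finite F\<close> that by blast
  moreover have "inner (P X) (P Y) = inner X Y" if "X \<in> D" "Y \<in> D" for X Y
    using inner_eq that inner_Lambda[OF \<open>a \<in> A\<close>] by (simp add: P_def)
  ultimately have "P X = X" if "X \<in> D" for X
    using fixed_if_inner_preserving_fixes_spanning_set \<open>F \<subseteq> D\<close> \<open>D \<subseteq> span F\<close> that by blast
  then show ?thesis
    using \<open>a \<in> A\<close> unfolding P_def by (intro bexI[of _ a]) auto
qed

lemma inner_gamma_eq_if_Lambda_gamma_eq:
  assumes "a \<in> A" and "\<forall>X\<in>D. X = \<Lambda> a (\<gamma> X)"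
  shows "\<forall>X\<in>D. \<forall>Y\<in>D. inner X Y = inner (\<gamma> X) (\<gamma> Y)"
  using assms inner_Lambda by (metis (no_types))

lemma Lambda_gamma_eq_on_cone_gen:
  assumes "a \<in> A" and fixes_D: "\<forall>X\<in>D. X = \<Lambda> a (\<gamma> X)" and "Z \<in> cone_gen D"
  shows "Z = \<Lambda> a (\<gamma> Z)"
proof -
  obtain m :: nat and \<alpha> X
    where Z: "Z = (\<Sum>i=1..m. \<alpha> i *\<^sub>R X i)" and X: "\<forall>i\<in>{1..m}. X i \<in> D \<and> \<alpha> i \<ge> 0"
    using \<open>Z \<in> cone_gen D\<close> unfolding cone_gen_def by blast
  have "\<gamma> Z = (\<Sum>i=1..m. \<alpha> i *\<^sub>R \<gamma> (X i))"
    unfolding Z using inner_gamma_eq_if_Lambda_gamma_eq[OF assms(1,2)] X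
    by (intro gamma_sum_nonneg_scaleR) auto
  then have "\<Lambda> a (\<gamma> Z) = (\<Sum>i=1..m. \<alpha> i *\<^sub>R \<Lambda> a (\<gamma> (X i)))"
    using linear_Lambda[OF \<open>a \<in> A\<close>] by (simp add: linear_sum linear_scale)
  also have "\<dots> = Z"
    unfolding Z using fixes_D X by (intro sum.cong) auto
  finally show ?thesis ..
qed

end

theorem proposition3p6:
  fixes G :: "('g, 'b) monoid_scheme"
    and act :: "'g \<Rightarrow> 'x::euclidean_space \<Rightarrow> 'x"
    and \<gamma> :: "'h::euclidean_space \<Rightarrow> 'x"
    and A :: "'a set"
    and \<Lambda> :: "'a \<Rightarrow> 'x \<Rightarrow> 'h"
    and D :: "'h set"
  assumes sds: "spectral_decomposition_system G act \<gamma> A \<Lambda>"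
    and D_ne: "D \<noteq> {}"
  shows "((\<forall>X\<in>D. \<forall>Y\<in>D. inner X Y = inner (\<gamma> X) (\<gamma> Y))
            \<longleftrightarrow> (\<forall>X\<in>D. \<forall>Y\<in>D. norm (X - Y) = norm (\<gamma> X - \<gamma> Y)))
       \<and> ((\<forall>X\<in>D. \<forall>Y\<in>D. norm (X - Y) = norm (\<gamma> X - \<gamma> Y))
            \<longleftrightarrow> (\<exists>a\<in>A. \<forall>X\<in>D. X = \<Lambda> a (\<gamma> X)))
       \<and> ((\<exists>a\<in>A. \<forall>X\<in>D. X = \<Lambda> a (\<gamma> X))
            \<longleftrightarrow> (\<exists>a\<in>A. \<forall>X\<in>cone_gen D. X = \<Lambda> a (\<gamma> X)))
       \<and> ((\<forall>X\<in>D. \<forall>Y\<in>D. inner X Y = inner (\<gamma> X) (\<gamma> Y)) \<longrightarrow>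
            (\<forall>m::nat. \<forall>X \<alpha>. m \<ge> 1 \<and> (\<forall>i\<in>{1..m}. X i \<in> D \<and> \<alpha> i \<ge> (0::real)) \<longrightarrow>
               \<gamma> (\<Sum>i=1..m. \<alpha> i *\<^sub>R X i) = (\<Sum>i=1..m. \<alpha> i *\<^sub>R \<gamma> (X i))))"
proof -
  have "(\<forall>X\<in>D. \<forall>Y\<in>D. inner X Y = inner (\<gamma> X) (\<gamma> Y))
      \<longleftrightarrow> (\<forall>X\<in>D. \<forall>Y\<in>D. norm (X - Y) = norm (\<gamma> X - \<gamma> Y))"
    using norm_preserving_inner_eq_iff_dist_eq[OF norm_gamma[OF sds]] by simp
  moreover have "(\<forall>X\<in>D. \<forall>Y\<in>D. inner X Y = inner (\<gamma> X) (\<gamma> Y))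
      \<longleftrightarrow> (\<exists>a\<in>A. \<forall>X\<in>D. X = \<Lambda> a (\<gamma> X))"
    using Lambda_gamma_eq_if_inner_gamma_eq[OF sds, where D = D]
      inner_gamma_eq_if_Lambda_gamma_eq[OF sds, where D = D]
    by blast
  moreover have "(\<exists>a\<in>A. \<forall>X\<in>D. X = \<Lambda> a (\<gamma> X)) \<longleftrightarrow> (\<exists>a\<in>A. \<forall>X\<in>cone_gen D. X = \<Lambda> a (\<gamma> X))"
    using Lambda_gamma_eq_on_cone_gen[OF sds, where D = D] subset_cone_gen[of D] by blast
  moreover have "\<gamma> (\<Sum>i=1..m. \<alpha> i *\<^sub>R X i) = (\<Sum>i=1..m. \<alpha> i *\<^sub>R \<gamma> (X i))"
    if "\<forall>X\<in>D. \<forall>Y\<in>D. inner X Y = inner (\<gamma> X) (\<gamma> Y)" and "\<forall>i\<in>{1..m}. X i \<in> D \<and> \<alpha> i \<ge> 0"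
    for m :: nat and X \<alpha>
    using gamma_sum_nonneg_scaleR[OF sds that(1) finite_atLeastAtMost that(2)] .
  ultimately show ?thesis
    by blast
qed

end
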